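(* Let $n\ge1$, $N=2^n$. Then $S^{(0)}_{0,0}=0$, $S^{(0)}_{0,1}=1$, and for all $w$: (i) if $0\le i<N/2$, then $S^{(n)}_{i,w}=\sum_{0\le w'\le \min(w,N/2),\ w'\equiv w \ (\mathrm{mod}\ 2)} S^{(n-1)}_{i,w'}\binom{N/2-w'}{(w-w')/2}2^{w'}$; (ii) if $N/2\le i<N$, then $S^{(n)}_{i,2w}=S^{(n-1)}_{i-N/2,w}$ and $S^{(n)}_{i,2w+1}=0$. Moreover, the numbers $T^{(n)}_{i,w}$ satisfy exactly the same recursions (i) and (ii) (with $S$ replaced by $T$), with initial values $T^{(0)}_{0,0}=1$, $T^{(0)}_{0,1}=0$.
   Context: All vectors are binary (over $GF(2)$), indices are zero-based. Let $G_2=\begin{pmatrix}1&0\\1&1\end{pmatrix}$ and $G_N=G_2^{\otimes n}$ for $N=2^n$ (with $G_1=(1)$), and let $\mathbf{g}_0,\ldots,\mathbf{g}_{N-1}$ denote the rows of $G_N$. For $0\le i<N$, $S^{(n)}_{i,w}$ is the number of words of Hamming weight $w$ in $\mathbf{g}_i+\langle\mathbf{g}_{i+1},\ldots,\mathbf{g}_{N-1}\rangle$, and $T^{(n)}_{i,w}$ is the number of words of Hamming weight $w$ in the linear span $\langle\mathbf{g}_{i+1},\ldots,\mathbf{g}_{N-1}\rangle$. *)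

theory Defs
  imports Main "HOL-Library.Z2"
begin

text \<open>Vectors over GF(2) are functions nat => bit (the field Z2 from HOL-Library),
  with coordinates 0..N-1 and zero elsewhere.\<close>

definition G2 :: "nat \<Rightarrow> nat \<Rightarrow> bit" where
  "G2 a b = (if a < 2 \<and> b < 2 \<and> b \<le> a then 1 else 0)"

text \<open>Kronecker power: G_{2^(n+1)} = G_2 \<otimes> G_{2^n}, G_1 = (1).\<close>
fun Gmat :: "nat \<Rightarrow> nat \<Rightarrow> nat \<Rightarrow> bit" where
  "Gmat 0 i j = (if i = 0 \<and> j = 0 then 1 else 0)"
| "Gmat (Suc n) i j =
     (if i < 2 ^ Suc n \<and> j < 2 ^ Suc n
      then G2 (i div 2 ^ n) (j div 2 ^ n) * Gmat n (i mod 2 ^ n) (j mod 2 ^ n)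
      else 0)"

definition grow :: "nat \<Rightarrow> nat \<Rightarrow> nat \<Rightarrow> bit" where
  "grow n i = (\<lambda>j. Gmat n i j)"

definition spanTail :: "nat \<Rightarrow> nat \<Rightarrow> (nat \<Rightarrow> bit) set" where
  "spanTail n i = {v. \<exists>c :: nat \<Rightarrow> bit.
      v = (\<lambda>j. \<Sum>k\<in>{i+1..<2^n}. c k * grow n k j)}"

definition hweight :: "nat \<Rightarrow> (nat \<Rightarrow> bit) \<Rightarrow> nat" where
  "hweight n v = card {j. j < 2 ^ n \<and> v j \<noteq> 0}"

definition Snum :: "nat \<Rightarrow> nat \<Rightarrow> nat \<Rightarrow> nat" where
  "Snum n i w = card {v. (\<exists>u\<in>spanTail n i. v = (\<lambda>j. grow n i j + u j)) \<and> hweight n v = w}"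

definition Tnum :: "nat \<Rightarrow> nat \<Rightarrow> nat \<Rightarrow> nat" where
  "Tnum n i w = card {v \<in> spanTail n i. hweight n v = w}"

end

theory Submission
  imports Defs
begin

(* Since G_{2N} = [[G_N, 0], [G_N, G_N]], row k < N of G_{2N} is (g_k | 0) and row N + k is
   (g_k | g_k), so the span of the rows A0 \<union> (N + A1) is the (u + v | v) construction
   {(a + b | b)} on the spans of A0 and A1.  For a row index N + i the coset g + span therefore
   consists of the doubled words (x | x), x in the coset of row i at half length, and all weights
   double.  For a row index i < N it consists of the words (x + b | b) with x in the coset of row i
   and b arbitrary; as wt(x + b) + wt(b) = wt(x) + 2 |supp b - supp x|, a fixed x of weight w'
   has 2^w' * C(N - w', (w - w') / 2) partners b of total weight w. *)

declare add_bit_eq_xor[simp del] mult_bit_eq_and[simp del]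

definition words :: "nat \<Rightarrow> (nat \<Rightarrow> bit) set" where
  "words m = {v. \<forall>j\<ge>2^m. v j = 0}"

definition word_append :: "nat \<Rightarrow> (nat \<Rightarrow> bit) \<Rightarrow> (nat \<Rightarrow> bit) \<Rightarrow> nat \<Rightarrow> bit" where
  "word_append m x y j = (if j < 2^m then x j else if j < 2 * 2^m then y (j - 2^m) else 0)"

definition plotkin :: "nat \<Rightarrow> (nat \<Rightarrow> bit) \<Rightarrow> (nat \<Rightarrow> bit) \<Rightarrow> nat \<Rightarrow> bit" where
  "plotkin m a b = word_append m (\<lambda>j. a j + b j) b"

definition word_support :: "nat \<Rightarrow> (nat \<Rightarrow> bit) \<Rightarrow> nat set" where
  "word_support m v = {j. j < 2^m \<and> v j \<noteq> 0}"

lemma hweight_eq_card_word_support: "hweight m v = card (word_support m v)"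
  by (simp add: hweight_def word_support_def)

lemma hweight_le: "hweight m v \<le> 2^m"
  using card_mono[of "{..<2^m}" "word_support m v"]
  by (auto simp: hweight_eq_card_word_support word_support_def)

lemma word_append_in_words: "word_append m x y \<in> words (Suc m)"
  by (simp add: words_def word_append_def)

lemma word_append_add:
  "word_append m x y j + word_append m x' y' j = word_append m (\<lambda>j. x j + x' j) (\<lambda>j. y j + y' j) j"
  by (simp add: word_append_def)

lemma sum_mult_word_append:
  "(\<Sum>k\<in>A. c k * word_append m (x k) (y k) j) =
     word_append m (\<lambda>j. \<Sum>k\<in>A. c k * x k j) (\<lambda>j. \<Sum>k\<in>A. c k * y k j) j"
  by (simp add: word_append_def)

lemma word_append_eq_iff:
  assumes "x \<in> words m" "y \<in> words m" "x' \<in> words m" "y' \<in> words m"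
  shows "word_append m x y = word_append m x' y' \<longleftrightarrow> x = x' \<and> y = y'"
proof
  assume eq: "word_append m x y = word_append m x' y'"
  have "x j = x' j \<and> y j = y' j" for j
  proof (cases "j < 2^m")
    case True
    then show ?thesis
      using fun_cong[OF eq, of j] fun_cong[OF eq, of "j + 2^m"] by (simp add: word_append_def)
  next
    case False
    then show ?thesis using assms by (simp add: words_def)
  qed
  then show "x = x' \<and> y = y'" by auto
qed simp

lemma plotkin_eq_iff:
  assumes "a \<in> words m" "b \<in> words m" "a' \<in> words m" "b' \<in> words m"
  shows "plotkin m a b = plotkin m a' b' \<longleftrightarrow> a = a' \<and> b = b'"
proof -
  have "(\<lambda>j. a j + b j) \<in> words m" "(\<lambda>j. a' j + b' j) \<in> words m"
    using assms by (auto simp: words_def)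
  then have "plotkin m a b = plotkin m a' b' \<longleftrightarrow> (\<lambda>j. a j + b j) = (\<lambda>j. a' j + b' j) \<and> b = b'"
    using assms by (simp add: plotkin_def word_append_eq_iff)
  then show ?thesis by (auto simp: fun_eq_iff)
qed

lemma word_support_word_append:
  "word_support (Suc m) (word_append m x y) =
     word_support m x \<union> (\<lambda>k. k + 2^m) ` word_support m y"
proof -
  have "j \<in> (\<lambda>k. k + 2^m) ` word_support m y"
    if "2^m \<le> j" "j < 2 * 2^m" "y (j - 2^m) \<noteq> 0" for j
    using that by (intro image_eqI[where x = "j - 2^m"]) (auto simp: word_support_def)
  then show ?thesis
    by (auto simp: word_support_def word_append_def) (meson not_le)
qed

lemma hweight_word_append:
  "hweight (Suc m) (word_append m x y) = hweight m x + hweight m y"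
  unfolding hweight_eq_card_word_support word_support_word_append
  by (subst card_Un_disjoint) (auto simp: word_support_def card_image)

lemma words_Suc: "words (Suc m) = {plotkin m a b | a b. a \<in> words m \<and> b \<in> words m}"
proof (intro equalityI subsetI)
  fix v assume v: "v \<in> words (Suc m)"
  define b where "b j = (if j < 2^m then v (j + 2^m) else 0)" for j
  define a where "a j = (if j < 2^m then v j + b j else 0)" for j
  have "v = plotkin m a b"
    using v by (auto simp: fun_eq_iff plotkin_def word_append_def a_def b_def words_def)
  moreover have "a \<in> words m" "b \<in> words m" by (auto simp: words_def a_def b_def)
  ultimately show "v \<in> {plotkin m a b | a b. a \<in> words m \<and> b \<in> words m}" by blast
qed (auto simp: plotkin_def word_append_in_words)

lemma grow_eq_0: "2^m \<le> j \<Longrightarrow> grow m k j = 0"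
  by (cases m) (simp_all add: grow_def)

lemma grow_Suc_low:
  assumes "k < 2^m"
  shows "grow (Suc m) k = word_append m (grow m k) (\<lambda>_. 0)"
proof
  fix j :: nat
  consider "j < 2^m" | "2^m \<le> j" "j < 2 * 2^m" | "2 * 2^m \<le> j" by linarith
  then show "grow (Suc m) k j = word_append m (grow m k) (\<lambda>_. 0) j"
  proof cases
    case 2
    then have "j div 2^m = 1" by (simp add: le_div_geq)
    then show ?thesis using 2 assms by (simp add: grow_def G2_def word_append_def)
  qed (use assms in \<open>simp_all add: grow_def G2_def word_append_def\<close>)
qed

lemma grow_Suc_high:
  assumes "k < 2^m"
  shows "grow (Suc m) (k + 2^m) = word_append m (grow m k) (grow m k)"
proof
  fix j :: nat
  have k: "(k + 2^m) div 2^m = 1" "(k + 2^m) mod 2^m = k" "k < 2^m"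
    using assms by (simp_all add: div_add_self2)
  consider "j < 2^m" | "2^m \<le> j" "j < 2 * 2^m" | "2 * 2^m \<le> j" by linarith
  then show "grow (Suc m) (k + 2^m) j = word_append m (grow m k) (grow m k) j"
  proof cases
    case 2
    then have "j div 2^m = 1" "j mod 2^m = j - 2^m" by (simp_all add: le_div_geq le_mod_geq)
    then show ?thesis using 2 k by (simp add: grow_def G2_def word_append_def)
  qed (use k in \<open>simp_all add: grow_def G2_def word_append_def\<close>)
qed

definition lincomb :: "nat \<Rightarrow> nat set \<Rightarrow> (nat \<Rightarrow> bit) \<Rightarrow> nat \<Rightarrow> bit" where
  "lincomb m A c j = (\<Sum>k\<in>A. c k * grow m k j)"

definition row_span :: "nat \<Rightarrow> nat set \<Rightarrow> (nat \<Rightarrow> bit) set" where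
  "row_span m A = range (lincomb m A)"

lemma spanTail_eq_row_span: "spanTail m i = row_span m {i + 1..<2^m}"
  by (auto simp: spanTail_def row_span_def lincomb_def[abs_def])

lemma row_span_subset_words: "row_span m A \<subseteq> words m"
  by (auto simp: row_span_def lincomb_def words_def grow_eq_0)

lemma row_span_empty: "row_span m {} = {\<lambda>_. 0}"
  by (simp add: row_span_def lincomb_def[abs_def])

lemma lincomb_Suc:
  assumes "A0 \<subseteq> {..<2^m}" "A1 \<subseteq> {..<2^m}"
  shows "lincomb (Suc m) (A0 \<union> (\<lambda>k. k + 2^m) ` A1) c =
    plotkin m (lincomb m A0 c) (lincomb m A1 (\<lambda>k. c (k + 2^m)))"
proof
  fix j
  have "finite A0" "finite A1" "A0 \<inter> (\<lambda>k. k + 2^m) ` A1 = {}"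
    using assms finite_subset by auto
  then have "lincomb (Suc m) (A0 \<union> (\<lambda>k. k + 2^m) ` A1) c j =
      (\<Sum>k\<in>A0. c k * grow (Suc m) k j) + (\<Sum>k\<in>A1. c (k + 2^m) * grow (Suc m) (k + 2^m) j)"
    by (simp add: lincomb_def sum.union_disjoint sum.reindex)
  also have "\<dots> = (\<Sum>k\<in>A0. c k * word_append m (grow m k) (\<lambda>_. 0) j) +
      (\<Sum>k\<in>A1. c (k + 2^m) * word_append m (grow m k) (grow m k) j)"
    using assms by (auto simp: grow_Suc_low grow_Suc_high subset_iff intro!: sum.cong arg_cong2[where f = "(+)"])
  also have "\<dots> = plotkin m (lincomb m A0 c) (lincomb m A1 (\<lambda>k. c (k + 2^m))) j"
    by (simp add: sum_mult_word_append word_append_add plotkin_def lincomb_def[abs_def])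
  finally show "lincomb (Suc m) (A0 \<union> (\<lambda>k. k + 2^m) ` A1) c j =
      plotkin m (lincomb m A0 c) (lincomb m A1 (\<lambda>k. c (k + 2^m))) j" .
qed

lemma row_span_Suc:
  assumes "A0 \<subseteq> {..<2^m}" "A1 \<subseteq> {..<2^m}"
  shows "row_span (Suc m) (A0 \<union> (\<lambda>k. k + 2^m) ` A1) =
    {plotkin m a b | a b. a \<in> row_span m A0 \<and> b \<in> row_span m A1}"
proof (intro equalityI subsetI)
  fix v assume "v \<in> row_span (Suc m) (A0 \<union> (\<lambda>k. k + 2^m) ` A1)"
  then show "v \<in> {plotkin m a b | a b. a \<in> row_span m A0 \<and> b \<in> row_span m A1}"
    by (auto simp: row_span_def lincomb_Suc[OF assms])
next
  fix v assume "v \<in> {plotkin m a b | a b. a \<in> row_span m A0 \<and> b \<in> row_span m A1}"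
  then obtain c0 c1 where v: "v = plotkin m (lincomb m A0 c0) (lincomb m A1 c1)"
    by (auto simp: row_span_def)
  define c where "c k = (if k < 2^m then c0 k else c1 (k - 2^m))" for k
  have "lincomb m A0 c = lincomb m A0 c0" "lincomb m A1 (\<lambda>k. c (k + 2^m)) = lincomb m A1 c1"
    using assms by (auto simp: lincomb_def[abs_def] c_def subset_iff intro!: sum.cong)
  then have "v = lincomb (Suc m) (A0 \<union> (\<lambda>k. k + 2^m) ` A1) c"
    by (simp add: v lincomb_Suc[OF assms])
  then show "v \<in> row_span (Suc m) (A0 \<union> (\<lambda>k. k + 2^m) ` A1)"
    by (simp add: row_span_def)
qed

lemma lessThan_two_power_Suc:
  "{..<2^Suc m} = {..<2^m} \<union> (\<lambda>k. k + 2^m) ` {..<2^m :: nat}"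
  by (simp add: lessThan_atLeast0 mult_2 ivl_disj_un_two(3))

lemma row_span_all: "row_span m {..<2^m} = words m"
proof (induction m)
  case 0
  have "v = lincomb 0 {..<2^0} (\<lambda>_. v 0)" if "v \<in> words 0" for v
    using that by (auto simp: lincomb_def grow_def words_def)
  then have "words 0 \<subseteq> row_span 0 {..<2^0}"
    by (auto simp: row_span_def)
  with row_span_subset_words show ?case by blast
next
  case (Suc m)
  then show ?case
    by (simp only: lessThan_two_power_Suc row_span_Suc[OF order_refl order_refl] words_Suc)
qed

lemma spanTail_subset_words: "spanTail m i \<subseteq> words m"
  by (simp add: spanTail_eq_row_span row_span_subset_words)

lemma spanTail_Suc_low:
  assumes "i < 2^m"
  shows "spanTail (Suc m) i = {plotkin m a b | a b. a \<in> spanTail m i \<and> b \<in> words m}"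
proof -
  have "{i + 1..<2^Suc m} = {i + 1..<2^m} \<union> (\<lambda>k. k + 2^m) ` {..<2^m}"
    using assms by (simp add: lessThan_atLeast0 mult_2 ivl_disj_un_two(3))
  then have "spanTail (Suc m) i = row_span (Suc m) ({i + 1..<2^m} \<union> (\<lambda>k. k + 2^m) ` {..<2^m})"
    by (simp only: spanTail_eq_row_span)
  also have "\<dots> = {plotkin m a b | a b. a \<in> row_span m {i + 1..<2^m} \<and> b \<in> row_span m {..<2^m}}"
    by (rule row_span_Suc) auto
  finally show ?thesis
    by (simp only: spanTail_eq_row_span row_span_all)
qed

lemma spanTail_Suc_high:
  assumes "i < 2^m"
  shows "spanTail (Suc m) (i + 2^m) = (\<lambda>b. word_append m b b) ` spanTail m i"
proof -
  have "{i + 2^m + 1..<2^Suc m} = {} \<union> (\<lambda>k. k + 2^m) ` {i + 1..<2^m}"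
    by (simp add: mult_2)
  then have "spanTail (Suc m) (i + 2^m) = row_span (Suc m) ({} \<union> (\<lambda>k. k + 2^m) ` {i + 1..<2^m})"
    by (simp only: spanTail_eq_row_span)
  also have "\<dots> = {plotkin m a b | a b. a \<in> row_span m {} \<and> b \<in> row_span m {i + 1..<2^m}}"
    by (rule row_span_Suc) auto
  finally show ?thesis
    by (auto simp: spanTail_eq_row_span row_span_empty plotkin_def)
qed

definition tail_coset :: "nat \<Rightarrow> nat \<Rightarrow> (nat \<Rightarrow> bit) set" where
  "tail_coset m i = (\<lambda>u j. grow m i j + u j) ` spanTail m i"

lemma Snum_eq_card_tail_coset: "Snum m i w = card {v \<in> tail_coset m i. hweight m v = w}"
  unfolding Snum_def tail_coset_def by (rule arg_cong[where f = card]) auto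

lemma tail_coset_subset_words: "tail_coset m i \<subseteq> words m"
  using spanTail_subset_words[of m i] by (auto simp: tail_coset_def words_def grow_eq_0)

lemma tail_coset_Suc_low:
  assumes "i < 2^m"
  shows "tail_coset (Suc m) i = {plotkin m x b | x b. x \<in> tail_coset m i \<and> b \<in> words m}"
proof -
  have "(\<lambda>j. grow (Suc m) i j + plotkin m a b j) = plotkin m (\<lambda>j. grow m i j + a j) b" for a b
    using assms by (auto simp: fun_eq_iff grow_Suc_low plotkin_def word_append_def add.assoc)
  then show ?thesis
    using assms by (auto simp: tail_coset_def spanTail_Suc_low intro!: image_eqI)
qed

lemma tail_coset_Suc_high:
  assumes "i < 2^m"
  shows "tail_coset (Suc m) (i + 2^m) = (\<lambda>x. word_append m x x) ` tail_coset m i"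
proof -
  have "(\<lambda>j. grow (Suc m) (i + 2^m) j + word_append m b b j) =
      word_append m (\<lambda>j. grow m i j + b j) (\<lambda>j. grow m i j + b j)" for b
    using assms by (simp add: fun_eq_iff grow_Suc_high word_append_add)
  then show ?thesis
    using assms by (simp add: tail_coset_def spanTail_Suc_high image_image)
qed

lemma hweight_add_plus_hweight:
  "hweight m (\<lambda>j. x j + b j) + hweight m b =
     hweight m x + 2 * card (word_support m b - word_support m x)"
proof -
  let ?X = "word_support m x" and ?B = "word_support m b"
  have fin: "finite ?X" "finite ?B" by (simp_all add: word_support_def)
  have sum_support: "word_support m (\<lambda>j. x j + b j) = (?X - ?B) \<union> (?B - ?X)"
    by (auto simp: word_support_def add_bit_eq_xor)
  have "hweight m (\<lambda>j. x j + b j) = card (?X - ?B) + card (?B - ?X)"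
    unfolding hweight_eq_card_word_support sum_support by (rule card_Un_disjoint) (use fin in auto)
  moreover have "card ?B = card (?B \<inter> ?X) + card (?B - ?X)" "card ?X = card (?X \<inter> ?B) + card (?X - ?B)"
    using fin by (simp_all add: card_Int_Diff)
  ultimately show ?thesis
    by (simp add: hweight_eq_card_word_support Int_commute)
qed

lemma bij_betw_word_support: "bij_betw (word_support m) (words m) (Pow {..<2^m})"
proof (rule bij_betw_byWitness[where f' = "\<lambda>B j. of_bool (j \<in> B)"])
  show "\<forall>v\<in>words m. (\<lambda>j. of_bool (j \<in> word_support m v)) = v"
    by (auto simp: words_def word_support_def fun_eq_iff)
qed (auto simp: words_def word_support_def)

lemma card_subsets_card_Diff:
  assumes "finite U" "X \<subseteq> U"
  shows "card {B. B \<subseteq> U \<and> card (B - X) = k} = 2 ^ card X * (card (U - X) choose k)"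
proof -
  have "bij_betw (\<lambda>B. (B \<inter> X, B - X)) {B. B \<subseteq> U \<and> card (B - X) = k}
      (Pow X \<times> {D. D \<subseteq> U - X \<and> card D = k})"
    by (rule bij_betw_byWitness[where f' = "\<lambda>(E, D). E \<union> D"])
      (use assms in \<open>auto intro!: arg_cong[where f = card]\<close>)
  then have "card {B. B \<subseteq> U \<and> card (B - X) = k} =
      card (Pow X) * card {D. D \<subseteq> U - X \<and> card D = k}"
    by (simp add: bij_betw_same_card card_cartesian_product)
  then show ?thesis
    using assms by (simp add: card_Pow n_subsets finite_subset)
qed

lemma card_words_pair_weight:
  "card {b \<in> words m. hweight m (\<lambda>j. x j + b j) + hweight m b = w} =
    (if hweight m x \<le> w \<and> hweight m x mod 2 = w mod 2
     then (2^m - hweight m x choose ((w - hweight m x) div 2)) * 2 ^ hweight m x else 0)"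
proof -
  define X where "X = word_support m x"
  have X: "X \<subseteq> {..<2^m}" "hweight m x = card X"
    by (auto simp: X_def word_support_def hweight_eq_card_word_support)
  have "card {b \<in> words m. hweight m (\<lambda>j. x j + b j) + hweight m b = w} =
      card {B \<in> Pow {..<2^m}. card X + 2 * card (B - X) = w}"
    by (rule bij_betw_same_card, rule bij_betw_Collect[OF bij_betw_word_support])
      (simp add: hweight_add_plus_hweight X X_def)
  also have "\<dots> = (if card X \<le> w \<and> card X mod 2 = w mod 2
      then (2^m - card X choose ((w - card X) div 2)) * 2 ^ card X else 0)"
  proof (cases "card X \<le> w \<and> card X mod 2 = w mod 2")
    case True
    then have "{B \<in> Pow {..<2^m}. card X + 2 * card (B - X) = w} =
        {B. B \<subseteq> {..<2^m} \<and> card (B - X) = (w - card X) div 2}"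
      by auto presburger+
    then show ?thesis
      using True X card_subsets_card_Diff[of "{..<2^m}" X] by (simp add: card_Diff_subset finite_subset)
  qed auto
  finally show ?thesis
    by (simp only: X)
qed

lemma card_doubled_weight:
  assumes "C \<subseteq> words m"
  shows "card {v \<in> (\<lambda>x. word_append m x x) ` C. hweight (Suc m) v = w} =
    card {x \<in> C. 2 * hweight m x = w}"
proof -
  have "{v \<in> (\<lambda>x. word_append m x x) ` C. hweight (Suc m) v = w} =
      (\<lambda>x. word_append m x x) ` {x \<in> C. 2 * hweight m x = w}"
    by (auto simp: hweight_word_append)
  moreover have "inj_on (\<lambda>x. word_append m x x) C"
    using assms by (auto simp: inj_on_def word_append_eq_iff subset_iff)
  ultimately show ?thesis
    by (simp add: card_image inj_on_subset)
qed

lemma card_plotkin_weight: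
  assumes "C \<subseteq> words m"
  shows "card {v \<in> {plotkin m x b | x b. x \<in> C \<and> b \<in> words m}. hweight (Suc m) v = w} =
    (\<Sum>w'\<in>{w'. w' \<le> min w (2^m) \<and> w' mod 2 = w mod 2}.
       card {x \<in> C. hweight m x = w'} * ((2^m - w') choose ((w - w') div 2)) * 2 ^ w')"
proof -
  define f where "f w' = (if w' \<le> w \<and> w' mod 2 = w mod 2
     then (2^m - w' choose ((w - w') div 2)) * 2 ^ w' else 0)" for w'
  let ?P = "SIGMA x:C. {b \<in> words m. hweight m (\<lambda>j. x j + b j) + hweight m b = w}"
  have fin: "finite C" "finite (words m)"
    using assms bij_betw_finite[OF bij_betw_word_support] finite_subset by auto
  have "{v \<in> {plotkin m x b | x b. x \<in> C \<and> b \<in> words m}. hweight (Suc m) v = w} =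
      (\<lambda>(x, b). plotkin m x b) ` ?P"
    by (auto simp: plotkin_def hweight_word_append)
  moreover have "inj_on (\<lambda>(x, b). plotkin m x b) ?P"
    using assms by (auto simp: inj_on_def plotkin_eq_iff subset_iff)
  ultimately have "card {v \<in> {plotkin m x b | x b. x \<in> C \<and> b \<in> words m}. hweight (Suc m) v = w} =
      (\<Sum>x\<in>C. f (hweight m x))"
    using fin by (simp add: card_image card_SigmaI card_words_pair_weight f_def)
  also have "\<dots> = (\<Sum>w'\<in>{..2^m}. \<Sum>x\<in>{x \<in> C. hweight m x = w'}. f (hweight m x))"
    using fin by (intro sum.group[symmetric]) (auto simp: hweight_le)
  also have "\<dots> = (\<Sum>w'\<in>{..2^m}. card {x \<in> C. hweight m x = w'} * f w')"
    by simp
  also have "\<dots> = (\<Sum>w'\<in>{w'. w' \<le> min w (2^m) \<and> w' mod 2 = w mod 2}.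
      card {x \<in> C. hweight m x = w'} * f w')"
    by (rule sum.mono_neutral_right) (auto simp: f_def)
  finally show ?thesis
    by (simp add: f_def mult.assoc)
qed

lemma Snum_Suc_low:
  assumes "i < 2^m"
  shows "Snum (Suc m) i w = (\<Sum>w'\<in>{w'. w' \<le> min w (2^m) \<and> w' mod 2 = w mod 2}.
    Snum m i w' * ((2^m - w') choose ((w - w') div 2)) * 2 ^ w')"
  unfolding Snum_eq_card_tail_coset tail_coset_Suc_low[OF assms]
  by (rule card_plotkin_weight[OF tail_coset_subset_words])

lemma Tnum_Suc_low:
  assumes "i < 2^m"
  shows "Tnum (Suc m) i w = (\<Sum>w'\<in>{w'. w' \<le> min w (2^m) \<and> w' mod 2 = w mod 2}.
    Tnum m i w' * ((2^m - w') choose ((w - w') div 2)) * 2 ^ w')"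
  unfolding Tnum_def spanTail_Suc_low[OF assms]
  by (rule card_plotkin_weight[OF spanTail_subset_words])

lemma Snum_Suc_high:
  "i < 2^m \<Longrightarrow>
    Snum (Suc m) (i + 2^m) (2 * w) = Snum m i w \<and> Snum (Suc m) (i + 2^m) (2 * w + 1) = 0"
  by (simp add: Snum_eq_card_tail_coset tail_coset_Suc_high card_doubled_weight
    tail_coset_subset_words double_not_eq_Suc_double)

lemma Tnum_Suc_high:
  "i < 2^m \<Longrightarrow>
    Tnum (Suc m) (i + 2^m) (2 * w) = Tnum m i w \<and> Tnum (Suc m) (i + 2^m) (2 * w + 1) = 0"
  by (simp add: Tnum_def spanTail_Suc_high card_doubled_weight spanTail_subset_words
    double_not_eq_Suc_double)

lemma tail_coset_0: "tail_coset 0 0 = {grow 0 0}"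
  by (simp add: tail_coset_def spanTail_eq_row_span row_span_empty)

lemma Snum_0_Tnum_0: "Snum 0 0 0 = 0 \<and> Snum 0 0 1 = 1 \<and> Tnum 0 0 0 = 1 \<and> Tnum 0 0 1 = 0"
proof -
  have "word_support 0 (grow 0 0) = {0}" "word_support 0 (\<lambda>_. 0) = {}"
    by (auto simp: word_support_def grow_def)
  then show ?thesis
    by (simp add: Snum_eq_card_tail_coset tail_coset_0 Tnum_def spanTail_eq_row_span
      row_span_empty hweight_eq_card_word_support Collect_conv_if)
qed

theorem mainTheorem2:
  shows "Snum 0 0 0 = 0 \<and> Snum 0 0 1 = 1 \<and> Tnum 0 0 0 = 1 \<and> Tnum 0 0 1 = 0 \<and>
    (\<forall>n\<ge>1. \<forall>i w. let N = (2::nat) ^ n in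
       (i < N div 2 \<longrightarrow>
          Snum n i w = (\<Sum>w'\<in>{w'. w' \<le> min w (N div 2) \<and> w' mod 2 = w mod 2}.
             Snum (n - 1) i w' * ((N div 2 - w') choose ((w - w') div 2)) * 2 ^ w') \<and>
          Tnum n i w = (\<Sum>w'\<in>{w'. w' \<le> min w (N div 2) \<and> w' mod 2 = w mod 2}.
             Tnum (n - 1) i w' * ((N div 2 - w') choose ((w - w') div 2)) * 2 ^ w')) \<and>
       (N div 2 \<le> i \<and> i < N \<longrightarrow>
          Snum n i (2 * w) = Snum (n - 1) (i - N div 2) w \<and> Snum n i (2 * w + 1) = 0 \<and>
          Tnum n i (2 * w) = Tnum (n - 1) (i - N div 2) w \<and> Tnum n i (2 * w + 1) = 0))"
proof -
  have high: "Snum (Suc m) i (2 * w) = Snum m (i - 2^m) w \<and> Snum (Suc m) i (2 * w + 1) = 0 \<and>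
      Tnum (Suc m) i (2 * w) = Tnum m (i - 2^m) w \<and> Tnum (Suc m) i (2 * w + 1) = 0"
    if "2^m \<le> i" "i < 2 * 2^m" for m i w
    using Snum_Suc_high[of "i - 2^m" m w] Tnum_Suc_high[of "i - 2^m" m w] that by simp
  show ?thesis
    using Snum_0_Tnum_0 high
    by (auto simp: Let_def Snum_Suc_low Tnum_Suc_low dest!: Suc_le_D)
qed

end
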